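(* Let $\mathbb{F}\in\{\mathbb{R},\mathbb{C}\}$ and let $M$ be the $n\times n$ companion matrix of a monic polynomial $f(x)=x^n+a_1x^{n-1}+\cdots+a_n\in\mathbb{F}[x]$. Then there is a tensor $(O;N)$ over $\mathbb{F}$ of rank at most $1$ such that $(E_n;M)-(O;N)$ is diagonalizable over $\mathbb{F}$. In particular $\mathrm{rank}_{\mathbb{F}}(E_n;M)\le n+1$.
   Context: The companion matrix of $f(x)=x^n+a_1x^{n-1}+\cdots+a_{n-1}x+a_n$ is the $n\times n$ matrix with ones on the subdiagonal (entries $(i+1,i)$), last column $(-a_n,-a_{n-1},\dots,-a_1)^T$, and zeros elsewhere. For matrices $A,B$ of the same size $m\times n$, $(A;B)$ denotes the $m\times n\times 2$ tensor with slices $A,B$; tensors are added slicewise. A rank-one $m\times n\times 2$ tensor over $\mathbb{F}$ has the form $(\alpha\,\mathbf{a}\mathbf{b}^T;\beta\,\mathbf{a}\mathbf{b}^T)$ with nonzero $\mathbf{a},\mathbf{b}$ and $(\alpha,\beta)\neq 0$; $\mathrm{rank}_{\mathbb{F}}(T)$ is the minimal number of rank-one tensors summing to $T$. $E_n$ is the identity matrix. An $m\times n\times 2$ tensor $(A;B)$ is diagonalizable over $\mathbb{F}$ if there are nonsingular $P,Q$ over $\mathbb{F}$ and diagonal $D_A,D_B$ with $PAQ=(D_A,O)$, $PBQ=(D_B,O)$ if $m\le n$, and $PAQ=(D_A,O)^T$, $PBQ=(D_B,O)^T$ if $m>n$. *)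

theory Defs
  imports "Jordan_Normal_Form.Matrix" "HOL-Computational_Algebra.Polynomial" Complex_Main
begin

text \<open>Companion matrix of a monic polynomial f of degree n (0-indexed):
  ones on the subdiagonal, entries (i+1,i); last column (-a_n,...,-a_1)^T,
  where a_k = coeff f (n-k), so row i of the last column is - coeff f i.\<close>
definition companion_mat :: "nat \<Rightarrow> 'a::comm_ring_1 poly \<Rightarrow> 'a mat" where
  "companion_mat n f = mat n n (\<lambda>(i,j).
     if j = n - 1 then - coeff f i else if i = j + 1 then 1 else 0)"

text \<open>An m x n x 2 tensor is a pair of m x n matrices (slices).\<close>
type_synonym 'a tensor2 = "'a mat \<times> 'a mat"

definition outer_vec :: "'a::times vec \<Rightarrow> 'a vec \<Rightarrow> 'a mat" where
  "outer_vec a b = mat (dim_vec a) (dim_vec b) (\<lambda>(i,j). a $ i * b $ j)"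

definition tensor_add :: "'a::plus tensor2 \<Rightarrow> 'a tensor2 \<Rightarrow> 'a tensor2" where
  "tensor_add S T = (fst S + fst T, snd S + snd T)"

definition tensor_sub :: "'a::minus tensor2 \<Rightarrow> 'a tensor2 \<Rightarrow> 'a tensor2" where
  "tensor_sub S T = (fst S - fst T, snd S - snd T)"

definition rank_one_tensor :: "nat \<Rightarrow> nat \<Rightarrow> 'a::field tensor2 \<Rightarrow> bool" where
  "rank_one_tensor m n T \<longleftrightarrow> (\<exists>\<alpha> \<beta> a b.
     a \<in> carrier_vec m \<and> b \<in> carrier_vec n \<and> a \<noteq> 0\<^sub>v m \<and> b \<noteq> 0\<^sub>v n \<and>
     (\<alpha>, \<beta>) \<noteq> (0, 0) \<and>
     T = (\<alpha> \<cdot>\<^sub>m outer_vec a b, \<beta> \<cdot>\<^sub>m outer_vec a b))"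

definition tensor_rank :: "nat \<Rightarrow> nat \<Rightarrow> 'a::field tensor2 \<Rightarrow> nat" where
  "tensor_rank m n T = (LEAST k. \<exists>Ts. length Ts = k \<and>
     (\<forall>S\<in>set Ts. rank_one_tensor m n S) \<and>
     T = foldr tensor_add Ts (0\<^sub>m m n, 0\<^sub>m m n))"

text \<open>An m x n matrix of the form (D,O) (if m \<le> n) or (D,O)^T (if m > n)
  with D diagonal: all entries off the main diagonal vanish.\<close>
definition rect_diagonal :: "'a::zero mat \<Rightarrow> bool" where
  "rect_diagonal A \<longleftrightarrow> (\<forall>i<dim_row A. \<forall>j<dim_col A. i \<noteq> j \<longrightarrow> A $$ (i,j) = 0)"

definition tensor_diagonalizable :: "nat \<Rightarrow> nat \<Rightarrow> 'a::field tensor2 \<Rightarrow> bool" where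
  "tensor_diagonalizable m n T \<longleftrightarrow> (\<exists>P Q.
     P \<in> carrier_mat m m \<and> Q \<in> carrier_mat n n \<and> invertible_mat P \<and> invertible_mat Q \<and>
     rect_diagonal (P * fst T * Q) \<and> rect_diagonal (P * snd T * Q))"

definition companion_claim :: "nat \<Rightarrow> 'a::field poly \<Rightarrow> bool" where
  "companion_claim n f \<longleftrightarrow>
     (\<exists>N. N \<in> carrier_mat n n \<and> tensor_rank n n (0\<^sub>m n n, N) \<le> 1 \<and>
        tensor_diagonalizable n n (tensor_sub (1\<^sub>m n, companion_mat n f) (0\<^sub>m n n, N)))
     \<and> tensor_rank n n (1\<^sub>m n, companion_mat n f) \<le> n + 1"

end

theory Submission
  imports Defs "Jordan_Normal_Form.Determinant"
begin

text \<open>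
  Over a field of characteristic zero pick the monic polynomial
  g = (x - 0)(x - 1)...(x - (n-1)) with n distinct roots.  Its companion matrix C_g is
  diagonalised by the Vandermonde matrix V of the roots: V C_g = diag(0,...,n-1) V.
  Two companion matrices of degree n differ only in their last column, so
  N = C_f - C_g is a rank-one matrix, and (E_n; C_f) - (O; N) = (E_n; C_g) is
  diagonalised by the pair (V, V^-1).  Writing (E_n; C_g) = V^-1 (E_n; diag) V
  as the sum of the n rank-one tensors  V^-1 e_k e_k^T V  and adding (O; N) gives
  a decomposition of (E_n; C_f) into n + 1 rank-one tensors.
\<close>

section \<open>Rank-one decompositions of m x n x 2 tensors\<close>

definition rank_one_decomposition ::
    "nat \<Rightarrow> nat \<Rightarrow> 'a::field tensor2 list \<Rightarrow> 'a tensor2 \<Rightarrow> bool" where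
  "rank_one_decomposition m n Ts T \<longleftrightarrow>
     (\<forall>S\<in>set Ts. rank_one_tensor m n S) \<and> T = foldr tensor_add Ts (0\<^sub>m m n, 0\<^sub>m m n)"

lemma tensor_rank_le_decomposition:
  assumes "rank_one_decomposition m n Ts T"
  shows "tensor_rank m n T \<le> length Ts"
  unfolding tensor_rank_def
  by (rule Least_le) (use assms in \<open>auto simp: rank_one_decomposition_def\<close>)

lemma rank_one_tensor_carrier:
  assumes "rank_one_tensor m n S"
  shows "fst S \<in> carrier_mat m n" "snd S \<in> carrier_mat m n"
  using assms by (auto simp: rank_one_tensor_def outer_vec_def)

lemma foldr_tensor_add_entries:
  fixes Ts :: "'a::comm_monoid_add tensor2 list"
  assumes "\<forall>S\<in>set Ts. fst S \<in> carrier_mat m n \<and> snd S \<in> carrier_mat m n"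
  shows "foldr tensor_add Ts (0\<^sub>m m n, 0\<^sub>m m n) =
    (mat m n (\<lambda>(i,j). \<Sum>S\<leftarrow>Ts. fst S $$ (i,j)), mat m n (\<lambda>(i,j). \<Sum>S\<leftarrow>Ts. snd S $$ (i,j)))"
  using assms
proof (induction Ts)
  case Nil
  then show ?case by (auto intro!: eq_matI)
next
  case (Cons S Ts)
  then show ?case by (auto simp: tensor_add_def intro!: eq_matI)
qed

lemma rank_one_decomposition_append:
  assumes S: "rank_one_decomposition m n Ts S" and T: "rank_one_decomposition m n Us T"
  shows "rank_one_decomposition m n (Ts @ Us) (tensor_add S T)"
proof -
  have rk: "\<forall>R\<in>set (Ts @ Us). rank_one_tensor m n R"
    using S T by (auto simp: rank_one_decomposition_def)
  have carrier: "\<forall>R\<in>set Vs. fst R \<in> carrier_mat m n \<and> snd R \<in> carrier_mat m n"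
    if "set Vs \<subseteq> set (Ts @ Us)" for Vs :: "'a tensor2 list"
    using that rk rank_one_tensor_carrier by blast
  have "tensor_add S T = foldr tensor_add (Ts @ Us) (0\<^sub>m m n, 0\<^sub>m m n)"
    using S T unfolding rank_one_decomposition_def
    by (simp only: foldr_tensor_add_entries[OF carrier] set_append Un_upper1 Un_upper2 order_refl)
      (auto simp: tensor_add_def intro!: eq_matI)
  with rk show ?thesis by (simp add: rank_one_decomposition_def)
qed

lemma outer_vec_decomposition:
  fixes a b :: "'a::field vec"
  assumes a: "a \<in> carrier_vec m" and b: "b \<in> carrier_vec n"
  obtains Ts where "length Ts \<le> 1"
    "rank_one_decomposition m n Ts (\<alpha> \<cdot>\<^sub>m outer_vec a b, \<beta> \<cdot>\<^sub>m outer_vec a b)"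
proof (cases "a = 0\<^sub>v m \<or> b = 0\<^sub>v n \<or> (\<alpha>, \<beta>) = (0, 0)")
  case True
  then have "(\<alpha> \<cdot>\<^sub>m outer_vec a b, \<beta> \<cdot>\<^sub>m outer_vec a b) = (0\<^sub>m m n, 0\<^sub>m m n)"
    using a b by (auto simp: outer_vec_def intro!: eq_matI)
  then show ?thesis by (intro that[of "[]"]) (auto simp: rank_one_decomposition_def)
next
  case False
  then have "rank_one_tensor m n (\<alpha> \<cdot>\<^sub>m outer_vec a b, \<beta> \<cdot>\<^sub>m outer_vec a b)"
    using a b unfolding rank_one_tensor_def by blast
  then show ?thesis
    using a b by (intro that[of "[(\<alpha> \<cdot>\<^sub>m outer_vec a b, \<beta> \<cdot>\<^sub>m outer_vec a b)]"])
      (auto simp: rank_one_decomposition_def tensor_add_def outer_vec_def intro!: eq_matI)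
qed

lemma diagonal_pair_decomposition:
  fixes W X :: "'a::field mat"
  assumes W: "W \<in> carrier_mat n n" and X: "X \<in> carrier_mat n n" and XW: "X * W = 1\<^sub>m n"
  defines "R k \<equiv> outer_vec (col W k) (row X k)"
  shows "rank_one_decomposition n n (map (\<lambda>k. (R k, d k \<cdot>\<^sub>m R k)) [0..<n])
           (W * X, W * mat_diag n d * X)"
proof -
  have rank_one: "rank_one_tensor n n (R k, d k \<cdot>\<^sub>m R k)" if k: "k < n" for k
  proof -
    have "row X k \<bullet> col W k = 1" using XW W X k by (metis index_mult_mat(1) index_one_mat(1)
          carrier_matD)
    then have "col W k \<noteq> 0\<^sub>v n" "row X k \<noteq> 0\<^sub>v n" using W X by auto
    then show ?thesis unfolding rank_one_tensor_def R_def using W X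
      by (intro exI[of _ 1] exI[of _ "d k"] exI[of _ "col W k"] exI[of _ "row X k"]) auto
  qed
  have sums: "foldr tensor_add (map (\<lambda>k. (R k, d k \<cdot>\<^sub>m R k)) [0..<n]) (0\<^sub>m n n, 0\<^sub>m n n)
      = (mat n n (\<lambda>(i,j). \<Sum>k<n. W $$ (i,k) * X $$ (k,j)),
         mat n n (\<lambda>(i,j). \<Sum>k<n. W $$ (i,k) * d k * X $$ (k,j)))"
    using W X by (subst foldr_tensor_add_entries)
      (auto simp: R_def outer_vec_def sum_list_map_eq_sum_count2 sum_set_upt_conv_sum_list_nat[symmetric]
         lessThan_atLeast0 ac_simps intro!: eq_matI sum.cong)
  have "W * X = mat n n (\<lambda>(i,j). \<Sum>k<n. W $$ (i,k) * X $$ (k,j))"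
    using W X by (auto simp: scalar_prod_def lessThan_atLeast0 intro!: eq_matI sum.cong)
  moreover have "W * mat_diag n d * X = mat n n (\<lambda>(i,j). \<Sum>k<n. W $$ (i,k) * d k * X $$ (k,j))"
    using W X by (auto simp: mat_diag_mult_right scalar_prod_def lessThan_atLeast0
        intro!: eq_matI sum.cong)
  ultimately show ?thesis using rank_one sums by (auto simp: rank_one_decomposition_def)
qed

section \<open>Vandermonde matrices and companion matrices\<close>

definition vandermonde_mat :: "nat \<Rightarrow> (nat \<Rightarrow> 'a::comm_ring_1) \<Rightarrow> 'a mat" where
  "vandermonde_mat n x = mat n n (\<lambda>(k,i). x k ^ i)"

text \<open>For distinct points the Vandermonde matrix has trivial kernel: a vector in the kernel
  is the coefficient vector of a polynomial of degree below n with n distinct roots.\<close>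
lemma vandermonde_kernel_trivial:
  fixes x :: "nat \<Rightarrow> 'a::field"
  assumes inj: "inj_on x {..<n}" and v: "v \<in> carrier_vec n"
    and ker: "vandermonde_mat n x *\<^sub>v v = 0\<^sub>v n"
  shows "v = 0\<^sub>v n"
proof -
  define p where "p = (\<Sum>i<n. monom (v $ i) i)"
  have coeff_p: "coeff p i = (if i < n then v $ i else 0)" for i
    unfolding p_def coeff_sum by (auto simp: coeff_monom)
  have roots: "poly p (x k) = 0" if "k < n" for k
  proof -
    have "poly p (x k) = (vandermonde_mat n x *\<^sub>v v) $ k"
      using that v by (auto simp: p_def poly_sum poly_monom vandermonde_mat_def scalar_prod_def
          lessThan_atLeast0 mult.commute intro!: sum.cong)
    with ker that show ?thesis by simp
  qed
  have "p = 0"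
  proof (rule ccontr)
    assume "p \<noteq> 0"
    then have "degree p < n"
      using coeff_p[of "degree p"] leading_coeff_0_iff[of p] by (metis not_le_imp_less)
    have "x ` {..<n} \<subseteq> {r. poly p r = 0}" using roots by auto
    then have "card (x ` {..<n}) \<le> card {r. poly p r = 0}"
      by (rule card_mono[OF poly_roots_finite[OF \<open>p \<noteq> 0\<close>]])
    then have "n \<le> card {r. poly p r = 0}" by (simp add: card_image[OF inj])
    with card_poly_roots_bound[OF \<open>p \<noteq> 0\<close>] \<open>degree p < n\<close> show False by linarith
  qed
  have "v $ i = 0" if "i < n" for i
    using coeff_p[of i] that \<open>p = 0\<close> by simp
  then show ?thesis using v by (intro eq_vecI) auto
qed

lemma vandermonde_inverse:
  fixes x :: "nat \<Rightarrow> 'a::field"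
  assumes "inj_on x {..<n}"
  obtains W where "W \<in> carrier_mat n n" "W * vandermonde_mat n x = 1\<^sub>m n"
    "vandermonde_mat n x * W = 1\<^sub>m n"
proof -
  have V: "vandermonde_mat n x \<in> carrier_mat n n" by (simp add: vandermonde_mat_def)
  have "det (vandermonde_mat n x) \<noteq> 0"
    using det_0_iff_vec_prod_zero_field[OF V] vandermonde_kernel_trivial[OF assms] by blast
  from det_non_zero_imp_unit[OF V this, of "()"] show ?thesis
    using that unfolding Units_def ring_mat_def by auto
qed

lemma invertible_mat_of_inverse:
  fixes A B :: "'a::semiring_1 mat"
  assumes "A \<in> carrier_mat n n" "B \<in> carrier_mat n n" "A * B = 1\<^sub>m n" "B * A = 1\<^sub>m n"
  shows "invertible_mat A"
  using assms unfolding invertible_mat_def inverts_mat_def by auto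

lemma vandermonde_companion:
  fixes g :: "'a::field poly"
  assumes deg: "degree g = n" and monic: "lead_coeff g = 1"
    and roots: "\<And>k. k < n \<Longrightarrow> poly g (x k) = 0"
  shows "vandermonde_mat n x * companion_mat n g = mat_diag n x * vandermonde_mat n x"
proof (rule eq_matI)
  fix k j assume "k < dim_row (mat_diag n x * vandermonde_mat n x)"
    "j < dim_col (mat_diag n x * vandermonde_mat n x)"
  then have k: "k < n" and j: "j < n" by (simp_all add: vandermonde_mat_def mat_diag_def)
  have "(vandermonde_mat n x * companion_mat n g) $$ (k,j) =
      (\<Sum>i<n. x k ^ i * (if j = n - 1 then - coeff g i else if i = j + 1 then 1 else 0))"
    using k j by (auto simp: scalar_prod_def companion_mat_def vandermonde_mat_def
        lessThan_atLeast0 intro!: sum.cong)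
  also have "\<dots> = x k ^ Suc j"
  proof (cases "j = n - 1")
    case True
    have "0 = (\<Sum>i\<le>n. coeff g i * x k ^ i)" using roots[OF k] deg by (simp add: poly_altdef)
    also have "\<dots> = (\<Sum>i<n. x k ^ i * coeff g i) + x k ^ n"
      using deg monic by (simp add: lessThan_Suc_atMost[symmetric] mult.commute)
    finally have "(\<Sum>i<n. x k ^ i * coeff g i) = - (x k ^ n)"
      by (simp add: eq_neg_iff_add_eq_0)
    moreover have "Suc j = n" using True j by simp
    ultimately show ?thesis using True by (simp add: sum_negf)
  next
    case False
    then have "j + 1 < n" using j by auto
    then show ?thesis using False by (simp add: if_distrib cong: if_cong)
  qed
  also have "\<dots> = (mat_diag n x * vandermonde_mat n x) $$ (k,j)"
    using k j by (subst mat_diag_mult_left[of _ n n]) (simp_all add: vandermonde_mat_def)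
  finally show "(vandermonde_mat n x * companion_mat n g) $$ (k,j) =
      (mat_diag n x * vandermonde_mat n x) $$ (k,j)" .
qed (simp_all add: vandermonde_mat_def companion_mat_def mat_diag_def)

lemma companion_mat_diff:
  fixes f g :: "'a::comm_ring_1 poly"
  shows "companion_mat n f - companion_mat n g =
    outer_vec (vec n (\<lambda>i. coeff g i - coeff f i)) (unit_vec n (n - 1))"
  by (auto simp: companion_mat_def outer_vec_def unit_vec_def intro!: eq_matI)

section \<open>The companion tensor\<close>

lemma tensor_diagonalizable_similar_diag:
  fixes V W :: "'a::field mat"
  assumes V: "V \<in> carrier_mat n n" and W: "W \<in> carrier_mat n n"
    and VW: "V * W = 1\<^sub>m n" and WV: "W * V = 1\<^sub>m n"
  shows "tensor_diagonalizable n n (1\<^sub>m n, W * mat_diag n d * V)"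
proof -
  have "V * 1\<^sub>m n * W = 1\<^sub>m n" using V VW by simp
  moreover have "V * (W * mat_diag n d * V) * W = mat_diag n d"
  proof -
    have "V * (W * mat_diag n d * V) * W = (V * W) * mat_diag n d * (V * W)"
      using V W by (subst assoc_mult_mat[of _ n n _ n _ n], auto)+
    then show ?thesis
      using VW by (simp add: left_mult_one_mat[OF mat_diag_dim] right_mult_one_mat[OF mat_diag_dim])
  qed
  moreover have "rect_diagonal (1\<^sub>m n :: 'a mat)" "rect_diagonal (mat_diag n d)"
    by (auto simp: rect_diagonal_def mat_diag_def)
  ultimately show ?thesis unfolding tensor_diagonalizable_def
    using V W VW WV invertible_mat_of_inverse
    by (intro exI[of _ V] exI[of _ W]) auto
qed

lemma companion_mat_diff_decomposition:
  fixes f g :: "'a::field poly"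
  obtains Ts where "length Ts \<le> 1"
    "rank_one_decomposition n n Ts (0\<^sub>m n n, companion_mat n f - companion_mat n g)"
proof -
  define a where "a = vec n (\<lambda>i. coeff g i - coeff f i)"
  define R where "R = outer_vec a (unit_vec n (n - 1))"
  have a: "a \<in> carrier_vec n" by (simp add: a_def)
  have R: "R \<in> carrier_mat n n" by (simp add: R_def outer_vec_def a_def)
  obtain Ts where Ts: "length Ts \<le> 1" "rank_one_decomposition n n Ts (0 \<cdot>\<^sub>m R, 1 \<cdot>\<^sub>m R)"
    unfolding R_def by (rule outer_vec_decomposition[OF a unit_vec_carrier])
  have "(0 \<cdot>\<^sub>m R, 1 \<cdot>\<^sub>m R) = (0\<^sub>m n n, companion_mat n f - companion_mat n g)"
    using R companion_mat_diff[of n f g] by (auto simp: R_def a_def)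
  with Ts show ?thesis by (intro that) auto
qed

lemma diagonalisable_companion_mat:
  fixes n :: nat
  obtains g :: "'a::field_char_0 poly" and V W d where
    "V \<in> carrier_mat n n" "W \<in> carrier_mat n n" "V * W = 1\<^sub>m n" "W * V = 1\<^sub>m n"
    "companion_mat n g = W * mat_diag n d * V"
proof -
  define x where "x = (\<lambda>k::nat. of_nat k :: 'a)"
  define g where "g = (\<Prod>k<n. [:- x k, 1:])"
  have deg_g: "degree g = n" unfolding g_def by (subst degree_prod_eq_sum_degree) auto
  have monic_g: "lead_coeff g = 1" unfolding g_def lead_coeff_prod by simp
  have roots_g: "poly g (x k) = 0" if "k < n" for k
    unfolding g_def poly_prod using that by (auto intro!: bexI[of _ k])
  have inj: "inj_on x {..<n}" by (auto simp: x_def inj_on_def)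
  define V where "V = vandermonde_mat n x"
  have V: "V \<in> carrier_mat n n" by (simp add: V_def vandermonde_mat_def)
  obtain W where W: "W \<in> carrier_mat n n" and WV: "W * V = 1\<^sub>m n" and VW: "V * W = 1\<^sub>m n"
    using vandermonde_inverse[OF inj] unfolding V_def by blast
  have Cg: "companion_mat n g \<in> carrier_mat n n" by (simp add: companion_mat_def)
  have "W * (V * companion_mat n g) = (W * V) * companion_mat n g"
    using W V Cg by (rule assoc_mult_mat[symmetric])
  then have "companion_mat n g = W * (V * companion_mat n g)"
    using WV Cg by simp
  also have "V * companion_mat n g = mat_diag n x * V"
    unfolding V_def by (rule vandermonde_companion[OF deg_g monic_g roots_g])
  also have "W * (mat_diag n x * V) = W * mat_diag n x * V"
    using W V by (simp add: assoc_mult_mat[of _ n n _ n _ n])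
  finally show ?thesis by (rule that[OF V W VW WV])
qed

text \<open>The claim holds over every field of characteristic zero and for every polynomial f
  (the companion matrix of size n only involves the coefficients of degree below n):
  C_f = C_g + N with C_g diagonalisable and N = C_f - C_g of rank at most one.\<close>
lemma companion_claim_char_0:
  fixes f :: "'a::field_char_0 poly"
  shows "companion_claim n f"
proof -
  obtain g :: "'a poly" and V W d where V: "V \<in> carrier_mat n n" and W: "W \<in> carrier_mat n n"
    and VW: "V * W = 1\<^sub>m n" and WV: "W * V = 1\<^sub>m n" and Cg_diag: "companion_mat n g = W * mat_diag n d * V"
    by (rule diagonalisable_companion_mat)
  define Cf Cg where "Cf = companion_mat n f" and "Cg = companion_mat n g"
  define N where "N = Cf - Cg"
  have Cg_carrier: "Cg \<in> carrier_mat n n" by (simp add: Cg_def companion_mat_def)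
  have N_carrier: "N \<in> carrier_mat n n"
    unfolding N_def by (rule minus_carrier_mat[OF Cg_carrier])
  have Cf_split: "(1\<^sub>m n, Cf) = tensor_add (1\<^sub>m n, Cg) (0\<^sub>m n n, N)"
    and Cg_rest: "tensor_sub (1\<^sub>m n, Cf) (0\<^sub>m n n, N) = (1\<^sub>m n, Cg)"
    using Cg_carrier by (auto simp: N_def Cf_def companion_mat_def tensor_add_def tensor_sub_def
        intro!: eq_matI)
  obtain Ts where Ts: "length Ts \<le> 1" "rank_one_decomposition n n Ts (0\<^sub>m n n, N)"
    by (rule companion_mat_diff_decomposition[of n f g, folded Cf_def Cg_def N_def])
  have "rank_one_decomposition n n (map (\<lambda>k. (outer_vec (col W k) (row V k),
      d k \<cdot>\<^sub>m outer_vec (col W k) (row V k))) [0..<n]) (1\<^sub>m n, Cg)"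
    using diagonal_pair_decomposition[OF W V VW, of d] WV Cg_diag by (simp add: Cg_def)
  from rank_one_decomposition_append[OF this Ts(2)] Ts(1)
  have "tensor_rank n n (1\<^sub>m n, Cf) \<le> n + 1"
    unfolding Cf_split by (auto dest!: tensor_rank_le_decomposition)
  moreover have "tensor_rank n n (0\<^sub>m n n, N) \<le> 1"
    using tensor_rank_le_decomposition[OF Ts(2)] Ts(1) by linarith
  moreover have "tensor_diagonalizable n n (tensor_sub (1\<^sub>m n, Cf) (0\<^sub>m n n, N))"
    unfolding Cg_rest Cg_def Cg_diag by (rule tensor_diagonalizable_similar_diag[OF V W VW WV])
  ultimately show ?thesis unfolding companion_claim_def Cf_def[symmetric] using N_carrier by blast
qed

theorem mainTheorem2:
  shows "(\<forall>(f :: real poly) n. lead_coeff f = 1 \<and> degree f = n \<longrightarrow> companion_claim n f) \<and>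
         (\<forall>(f :: complex poly) n. lead_coeff f = 1 \<and> degree f = n \<longrightarrow> companion_claim n f)"
  by (simp add: companion_claim_char_0)

end
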